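(* Let $f,g,f_n,g_n\in\mathcal D$ ($n\in\mathbb N$) with $f_n\to f$ and $g_n\to g$ uniformly on $[0,1]$. Then: (a) $\chi(f,g)\le\sup_{n\in\mathbb N}\chi(f_n,g_n)$; (b) if $g_n\lhd f_n$ for all $n\in\mathbb N$, then either $f=g$ or $g\lhd f$.
   Context: $\mathcal D$: the set of continuous strictly decreasing $f\colon[0,1]\to[0,1]$ with $f(0)=1$, $f(1)=0$. For $f\in\mathcal D$ and $a>0$, $f_{[a]}\colon[0,\frac1a]\to[0,1]$, $x\mapsto f(ax)$; for $b>0$, $f_{[a]}-bg$ is considered on $[0,\min\{1,\frac1a\}]$. Sign switches: for a continuous $\Delta\colon[c_0,d_0]\to\mathbb R$, a closed subinterval $[c,d]$ with $c_0<c\le d<d_0$ and $\Delta([c,d])=\{0\}$ is a sign switch if there is $\delta\in(0,\min\{c-c_0,d_0-d\}]$ with $\Delta(c-x)\Delta(d+x)<0$ for all $x\in(0,\delta]$; $\chi\Delta$ is the number of sign switches. Crossing number: $\chi(f,g):=\sup\{\chi(f_{[a]}-bg): a,b>0\}\in\mathbb N_0\cup\{\infty\}$. Domination: $g\lhd f$ means $\chi(f,g)=2$ and $g\le f$ pointwise. *)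

theory Defs
  imports "HOL-Analysis.Analysis" "HOL-Library.Extended_Nat"
begin

definition classD :: "(real \<Rightarrow> real) \<Rightarrow> bool" where
  "classD f \<longleftrightarrow> continuous_on {0..1} f \<and> strict_antimono_on {0..1} f
     \<and> f ` {0..1} \<subseteq> {0..1} \<and> f 0 = 1 \<and> f 1 = 0"

definition sign_switches :: "(real \<Rightarrow> real) \<Rightarrow> real \<Rightarrow> real \<Rightarrow> (real \<times> real) set" where
  "sign_switches \<Delta> c0 d0 = {(c, d). c0 < c \<and> c \<le> d \<and> d < d0 \<and>
     (\<forall>x\<in>{c..d}. \<Delta> x = 0) \<and>
     (\<exists>\<delta>>0. \<delta> \<le> min (c - c0) (d0 - d) \<and>
        (\<forall>x\<in>{0<..\<delta>}. \<Delta> (c - x) * \<Delta> (d + x) < 0))}"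

definition num_switches :: "(real \<Rightarrow> real) \<Rightarrow> real \<Rightarrow> real \<Rightarrow> enat" where
  "num_switches \<Delta> c0 d0 =
     (if finite (sign_switches \<Delta> c0 d0) then enat (card (sign_switches \<Delta> c0 d0)) else \<infinity>)"

definition crossing :: "(real \<Rightarrow> real) \<Rightarrow> (real \<Rightarrow> real) \<Rightarrow> enat" where
  "crossing f g = (SUP ab \<in> {ab. fst ab > 0 \<and> snd ab > 0}.
      num_switches (\<lambda>x. f (fst ab * x) - snd ab * g x) 0 (min 1 (1 / fst ab)))"

definition dominated :: "(real \<Rightarrow> real) \<Rightarrow> (real \<Rightarrow> real) \<Rightarrow> bool" where
  "dominated g f \<longleftrightarrow> crossing f g = 2 \<and> (\<forall>x\<in>{0..1}. g x \<le> f x)"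

end

(*
  (a) Every sign switch of f_[a] - b g can be thickened to a small interval whose endpoints
  carry opposite signs; these finitely many strict inequalities survive pointwise convergence,
  so F_n(a x) - b G_n(x) has sign changes on the same disjoint intervals for large n. A sign
  change need not produce a sign switch (the zeros may form a Cantor set), so b is perturbed:
  on each interval F_n(a x)/G_n(x) has its oscillation controlled by a monotone function, hence
  (Banach indicatrix) almost all of its level sets are finite, and for such a level b' every
  sign change of F_n(a x) - b' G_n(x) contains a sign switch.
  (b) Pointwise limits preserve g <= f, and (a) gives chi(f,g) <= 2. If g differs from f at x0,
  choose t > x0 with f(t) halfway between g(x0) and f(x0), and a = t / x0, b slightly above 1:
  then f_[a] - b g is negative at 0, positive at x0 and negative at 1/a, so chi(f,g) >= 2.
*)
theory Submission
  imports Defs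
begin

section \<open>Finite level sets under controlled oscillation\<close>

lemma exists_grid_cell:
  fixes L R x :: real and n :: nat
  assumes "L < R" and "n > 0" and "L \<le> x" "x \<le> R"
  shows "\<exists>j<n. L + real j * (R - L) / real n \<le> x \<and> x \<le> L + real (Suc j) * (R - L) / real n"
proof -
  define u where "u = (x - L) * real n / (R - L)"
  have u: "0 \<le> u" "u \<le> real n" and x_eq: "x = L + u * (R - L) / real n"
    using assms unfolding u_def by (auto simp: field_simps)
  define j where "j = min (nat \<lfloor>u\<rfloor>) (n - 1)"
  have "j < n" and "real j \<le> u" and "u \<le> real (Suc j)"
    using u \<open>n > 0\<close> unfolding j_def by (auto simp: min_def) linarith+
  moreover have "real j * (R - L) / real n \<le> u * (R - L) / real n"
    "u * (R - L) / real n \<le> real (Suc j) * (R - L) / real n"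
    using calculation assms by (auto intro!: divide_right_mono mult_right_mono simp del: of_nat_Suc)
  ultimately show ?thesis using x_eq by auto
qed

locale variation_controlled =
  fixes h V :: "real \<Rightarrow> real" and L R :: real
  assumes L_less_R: "L < R"
    and oscillation_le: "\<And>s t x x'. L \<le> s \<Longrightarrow> s \<le> x \<Longrightarrow> x \<le> t \<Longrightarrow> s \<le> x' \<Longrightarrow> x' \<le> t \<Longrightarrow>
      t \<le> R \<Longrightarrow> \<bar>h x - h x'\<bar> \<le> V t - V s"
begin

definition grid :: "nat \<Rightarrow> nat \<Rightarrow> real" where
  "grid n j = L + real j * (R - L) / real n"

definition cell_hull :: "nat \<Rightarrow> nat \<Rightarrow> real set" where
  "cell_hull n j = {h (grid n j) - (V (grid n (Suc j)) - V (grid n j)) ..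
                    h (grid n j) + (V (grid n (Suc j)) - V (grid n j))}"

definition cell_count :: "nat \<Rightarrow> real \<Rightarrow> nat" where
  "cell_count n y = card {j. j < n \<and> y \<in> cell_hull n j}"

lemma grid_mono: "i \<le> j \<Longrightarrow> grid n i \<le> grid n j"
  using L_less_R unfolding grid_def by (auto intro!: divide_right_mono mult_right_mono)

lemma grid_0 [simp]: "grid n 0 = L" and grid_last [simp]: "n > 0 \<Longrightarrow> grid n n = R"
  unfolding grid_def by auto

lemma grid_bounds: "n > 0 \<Longrightarrow> j \<le> n \<Longrightarrow> L \<le> grid n j \<and> grid n j \<le> R"
  using grid_mono[of 0 j n] grid_mono[of j n n] by auto

lemma mem_cell_hull:
  assumes "j < n" "grid n j \<le> x" "x \<le> grid n (Suc j)"
  shows "h x \<in> cell_hull n j"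
  using oscillation_le[of "grid n j" x "grid n (Suc j)" "grid n j"] assms grid_bounds[of n j]
    grid_bounds[of n "Suc j"] unfolding cell_hull_def by (auto simp: abs_le_iff)

lemma of_nat_cell_count: "of_nat (cell_count n y) = (\<Sum>j<n. indicator (cell_hull n j) y :: ennreal)"
proof -
  have "(\<Sum>j<n. indicator (cell_hull n j) y :: ennreal) = (\<Sum>j\<in>{..<n}. indicator {j. y \<in> cell_hull n j} j)"
    by (simp add: indicator_def)
  also have "\<dots> = of_nat (card ({..<n} \<inter> {j. y \<in> cell_hull n j}))"
    by (simp add: indicator_def sum.If_cases)
  also have "{..<n} \<inter> {j. y \<in> cell_hull n j} = {j. j < n \<and> y \<in> cell_hull n j}"
    by auto
  finally show ?thesis
    unfolding cell_count_def ..
qed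

lemma cell_count_measurable: "(\<lambda>y. of_nat (cell_count n y) :: ennreal) \<in> borel_measurable lborel"
  unfolding of_nat_cell_count cell_hull_def by measurable

lemma nn_integral_cell_count_le: "(\<integral>\<^sup>+ y. of_nat (cell_count n y) \<partial>lborel) \<le> ennreal (2 * (V R - V L))"
proof (cases "n = 0")
  case False
  have width: "0 \<le> V (grid n (Suc j)) - V (grid n j)" if "j < n" for j
    using oscillation_le[of "grid n j" "grid n j" "grid n (Suc j)" "grid n j"] that
      grid_bounds[of n j] grid_bounds[of n "Suc j"] grid_mono[of j "Suc j" n] False by auto
  have "(\<integral>\<^sup>+ y. of_nat (cell_count n y) \<partial>lborel) = (\<Sum>j<n. emeasure lborel (cell_hull n j))"
    unfolding of_nat_cell_count cell_hull_def by (subst nn_integral_sum) auto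
  also have "\<dots> = (\<Sum>j<n. ennreal (2 * (V (grid n (Suc j)) - V (grid n j))))"
    using width unfolding cell_hull_def by (intro sum.cong) (auto simp: ennreal_mult)
  also have "\<dots> = ennreal (\<Sum>j<n. 2 * (V (grid n (Suc j)) - V (grid n j)))"
    using width by (intro sum_ennreal) auto
  also have "(\<Sum>j<n. 2 * (V (grid n (Suc j)) - V (grid n j))) = 2 * (V R - V L)"
    unfolding sum_distrib_left[symmetric] sum_lessThan_telescope[of "\<lambda>j. V (grid n j)"]
    using False by simp
  finally show ?thesis by simp
qed (simp add: cell_count_def)

lemma eventually_card_le_cell_count:
  assumes "finite S" and S: "S \<subseteq> {x\<in>{L..R}. h x = y}"
  shows "eventually (\<lambda>n. card S \<le> cell_count n y) sequentially"
proof -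
  have "eventually (\<lambda>n. \<forall>x\<in>S. \<forall>x'\<in>S. x \<noteq> x' \<longrightarrow> (R - L) / real n < \<bar>x - x'\<bar>) sequentially"
  proof (intro eventually_ball_finite \<open>finite S\<close> ballI)
    fix x x' :: real
    show "eventually (\<lambda>n. x \<noteq> x' \<longrightarrow> (R - L) / real n < \<bar>x - x'\<bar>) sequentially"
    proof (cases "x = x'")
      case False
      then have "eventually (\<lambda>n. (R - L) / real n < \<bar>x - x'\<bar>) sequentially"
        by (intro order_tendstoD(2)[OF lim_const_over_n]) simp
      then show ?thesis
        by (rule eventually_mono) simp
    qed simp
  qed
  moreover have "eventually (\<lambda>n. n > 0) sequentially"
    by (simp add: eventually_gt_at_top)
  ultimately show ?thesis
  proof eventually_elim
    case (elim n)
    have "\<forall>x\<in>S. \<exists>j<n. grid n j \<le> x \<and> x \<le> grid n (Suc j)"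
      using exists_grid_cell[OF L_less_R, of n] S elim(2) unfolding grid_def by auto
    then obtain cell where cell: "\<And>x. x \<in> S \<Longrightarrow> cell x < n \<and> grid n (cell x) \<le> x \<and> x \<le> grid n (Suc (cell x))"
      by metis
    have width: "grid n (Suc j) - grid n j = (R - L) / real n" for j
      using elim(2) unfolding grid_def by (simp add: field_simps)
    have "\<bar>x - x'\<bar> \<le> (R - L) / real n" if "x \<in> S" "x' \<in> S" "cell x = cell x'" for x x'
      using cell[OF that(1)] cell[OF that(2)] width[of "cell x"] unfolding that(3) abs_le_iff
      by linarith
    then have "inj_on cell S"
      using elim(1) by (intro inj_onI) force
    moreover have "cell ` S \<subseteq> {j. j < n \<and> y \<in> cell_hull n j}"
      using cell S mem_cell_hull by fastforce
    ultimately show ?case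
      unfolding cell_count_def by (intro card_inj_on_le) auto
  qed
qed

text \<open>The Banach indicatrix argument: by Fatou's lemma the cell counts have a finite liminf
  almost everywhere, while an infinite level set forces them to infinity.\<close>
lemma AE_finite_level_set: "AE y in lborel. finite {x\<in>{L..R}. h x = y}"
proof -
  have "(\<integral>\<^sup>+ y. liminf (\<lambda>n. of_nat (cell_count n y)) \<partial>lborel)
      \<le> liminf (\<lambda>n. \<integral>\<^sup>+ y. of_nat (cell_count n y) \<partial>lborel)"
    by (intro nn_integral_liminf cell_count_measurable)
  also have "\<dots> \<le> ennreal (2 * (V R - V L))"
    using nn_integral_cell_count_le by (intro Liminf_le) simp_all
  finally have finite_liminf: "AE y in lborel. liminf (\<lambda>n. of_nat (cell_count n y) :: ennreal) \<noteq> \<infinity>"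
    by (intro nn_integral_PInf_AE borel_measurable_liminf cell_count_measurable)
      (metis ennreal_neq_top neq_top_trans infinity_ennreal_def)
  have liminf_infinite: "liminf (\<lambda>n. of_nat (cell_count n y) :: ennreal) = \<infinity>"
    if "infinite {x\<in>{L..R}. h x = y}" for y
  proof -
    have "eventually (\<lambda>n. z < of_nat (cell_count n y)) sequentially" if "z < \<infinity>" for z :: ennreal
    proof -
      obtain K where K: "z < of_nat K" using ennreal_Ex_less_of_nat \<open>z < \<infinity>\<close> by auto
      obtain S where "finite S" "card S = K" "S \<subseteq> {x\<in>{L..R}. h x = y}"
        using infinite_arbitrarily_large[OF \<open>infinite _\<close>] by blast
      then have "eventually (\<lambda>n. K \<le> cell_count n y) sequentially"
        using eventually_card_le_cell_count by blast
      then show ?thesis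
        by (rule eventually_mono) (use K in \<open>auto intro: order.strict_trans2\<close>)
    qed
    then show ?thesis
      unfolding infinity_ennreal_def top_unique[symmetric] le_Liminf_iff by blast
  qed
  show ?thesis
    using finite_liminf by (rule eventually_mono) (use liminf_infinite in blast)
qed

end

lemma AE_lborel_exists_between:
  fixes a b :: real
  assumes "AE y in lborel. P y" and "a < b"
  shows "\<exists>y\<in>{a<..<b}. P y"
proof (rule ccontr)
  assume "\<not> ?thesis"
  then have "{a<..<b} \<subseteq> {y \<in> space lborel. \<not> P y}"
    by auto
  moreover obtain N where "{y \<in> space lborel. \<not> P y} \<subseteq> N" "emeasure lborel N = 0" "N \<in> sets lborel"
    using assms(1) by (rule AE_E)
  ultimately have "emeasure lborel {a<..<b} \<le> 0"
    by (metis emeasure_mono order_trans)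
  with \<open>a < b\<close> show False
    by simp
qed

lemma variation_controlled_ratio:
  fixes \<phi> \<psi> :: "real \<Rightarrow> real"
  assumes "l < r" and \<phi>: "antimono_on {l..r} \<phi>" "\<phi> ` {l..r} \<subseteq> {0..1}"
    and \<psi>: "antimono_on {l..r} \<psi>" "\<psi> r > 0"
  shows "variation_controlled (\<lambda>x. \<phi> x / \<psi> x) (\<lambda>t. 1 / \<psi> t - \<phi> t / \<psi> r) l r"
proof
  fix s t x x'
  assume st: "l \<le> s" "s \<le> x" "x \<le> t" "s \<le> x'" "x' \<le> t" "t \<le> r"
  have anti: "\<phi> v \<le> \<phi> u \<and> \<psi> r \<le> \<psi> v \<and> \<psi> v \<le> \<psi> u" if "l \<le> u" "u \<le> v" "v \<le> r" for u v
    using that monotone_onD[OF \<phi>(1), of u v] monotone_onD[OF \<psi>(1), of u v]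
      monotone_onD[OF \<psi>(1), of v r] by auto
  have \<phi>x: "0 \<le> \<phi> x \<and> \<phi> x \<le> 1"
    using \<phi>(2) st by (auto simp: image_subset_iff)
  have inv: "1 / \<psi> s \<le> 1 / \<psi> u \<and> 1 / \<psi> u \<le> 1 / \<psi> t" if "s \<le> u" "u \<le> t" for u
    using anti[of s u] anti[of u t] that st \<psi>(2) by (auto intro!: divide_left_mono)
  have "\<phi> x / \<psi> x - \<phi> x' / \<psi> x' = \<phi> x * (1 / \<psi> x - 1 / \<psi> x') + (\<phi> x - \<phi> x') / \<psi> x'"
    by (simp add: algebra_simps diff_divide_distrib)
  then have "\<bar>\<phi> x / \<psi> x - \<phi> x' / \<psi> x'\<bar>
      \<le> \<bar>\<phi> x * (1 / \<psi> x - 1 / \<psi> x')\<bar> + \<bar>(\<phi> x - \<phi> x') / \<psi> x'\<bar>"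
    by (simp only: abs_triangle_ineq)
  also have "\<bar>\<phi> x * (1 / \<psi> x - 1 / \<psi> x')\<bar> \<le> 1 * (1 / \<psi> t - 1 / \<psi> s)"
    unfolding abs_mult using \<phi>x inv[of x] inv[of x'] st
    by (intro mult_mono) (auto simp: abs_le_iff)
  also have "\<bar>(\<phi> x - \<phi> x') / \<psi> x'\<bar> \<le> (\<phi> s - \<phi> t) / \<psi> r"
    unfolding abs_divide using anti[of s x] anti[of x t] anti[of s x'] anti[of x' t] st \<psi>(2)
    by (intro frac_le) (auto simp: abs_le_iff)
  finally show "\<bar>\<phi> x / \<psi> x - \<phi> x' / \<psi> x'\<bar>
      \<le> (1 / \<psi> t - \<phi> t / \<psi> r) - (1 / \<psi> s - \<phi> s / \<psi> r)"
    by (simp add: diff_divide_distrib)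
qed (fact \<open>l < r\<close>)

section \<open>Sign switches\<close>

lemma sign_switches_uminus: "sign_switches (\<lambda>x. - \<Delta> x) c0 d0 = sign_switches \<Delta> c0 d0"
  unfolding sign_switches_def by auto

lemma first_downcrossing:
  fixes \<Delta> :: "real \<Rightarrow> real"
  assumes cont: "continuous_on {l..r} \<Delta>" and "l \<le> r" "\<Delta> l > 0" "\<Delta> r < 0"
  shows "\<exists>z\<in>{l<..<r}. \<Delta> z = 0 \<and> (\<forall>x\<in>{l..<z}. 0 \<le> \<Delta> x) \<and> (\<forall>\<epsilon>>0. \<exists>s\<in>{z<..<z + \<epsilon>}. \<Delta> s < 0)"
proof -
  define N where "N = {x\<in>{l..r}. \<Delta> x < 0}"
  define z where "z = Inf N"
  have "r \<in> N" and bdd: "bdd_below N"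
    using assms unfolding N_def by (auto intro: bdd_belowI[of _ l])
  have "closed ({l..r} \<inter> \<Delta> -` {..0})"
    by (intro continuous_closed_preimage cont) auto
  moreover have "N \<subseteq> {l..r} \<inter> \<Delta> -` {..0}"
    unfolding N_def by auto
  moreover have "z \<in> closure N"
    unfolding z_def using \<open>r \<in> N\<close> bdd by (intro closure_contains_Inf) auto
  ultimately have "z \<in> {l..r}" and "\<Delta> z \<le> 0"
    using closure_minimal by blast+
  have nonneg: "0 \<le> \<Delta> x" if "l \<le> x" "x < z" for x
    using cInf_lower[OF _ bdd, of x] that \<open>z \<in> {l..r}\<close> unfolding N_def z_def by force
  have "l < z"
    using \<open>\<Delta> z \<le> 0\<close> \<open>z \<in> {l..r}\<close> \<open>\<Delta> l > 0\<close> by (cases "l = z") auto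
  have "0 \<le> \<Delta> z"
    using continuous_ge_on_closure[of "{l..<z}" \<Delta> z 0] \<open>l < z\<close> \<open>z \<in> {l..r}\<close> nonneg
      continuous_on_subset[OF cont, of "{l..z}"] by auto
  then have "\<Delta> z = 0"
    using \<open>\<Delta> z \<le> 0\<close> by simp
  moreover have "z < r"
    using \<open>\<Delta> z = 0\<close> \<open>\<Delta> r < 0\<close> \<open>z \<in> {l..r}\<close> by (cases "z = r") auto
  moreover have "\<exists>s\<in>{z<..<z + \<epsilon>}. \<Delta> s < 0" if "\<epsilon> > 0" for \<epsilon>
  proof -
    obtain s where "s \<in> N" "s < z + \<epsilon>"
      using cInf_less_iff[of N "z + \<epsilon>"] \<open>r \<in> N\<close> bdd \<open>\<epsilon> > 0\<close> unfolding z_def by auto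
    moreover have "z \<le> s"
      unfolding z_def using \<open>s \<in> N\<close> bdd by (rule cInf_lower)
    moreover have "s \<noteq> z"
      using \<open>s \<in> N\<close> \<open>\<Delta> z = 0\<close> unfolding N_def by auto
    ultimately show ?thesis
      using \<open>s \<in> N\<close> unfolding N_def by force
  qed
  ultimately show ?thesis
    using \<open>l < z\<close> nonneg by auto
qed

text \<open>The first downcrossing z is isolated among the finitely many zeros, so [z, z] is a
  sign switch.\<close>
lemma sign_switch_between_pos_neg:
  fixes \<Delta> :: "real \<Rightarrow> real"
  assumes cont: "continuous_on {l..r} \<Delta>" and "l \<le> r" "\<Delta> l > 0" "\<Delta> r < 0"
    and fin: "finite {x\<in>{l..r}. \<Delta> x = 0}" and "c0 \<le> l" "r \<le> d0"
  shows "\<exists>s\<in>sign_switches \<Delta> c0 d0. l < fst s \<and> snd s < r"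
proof -
  obtain z where z: "z \<in> {l<..<r}" "\<Delta> z = 0" and left: "\<And>x. l \<le> x \<Longrightarrow> x < z \<Longrightarrow> 0 \<le> \<Delta> x"
    and right: "\<And>\<epsilon>. \<epsilon> > 0 \<Longrightarrow> \<exists>s\<in>{z<..<z + \<epsilon>}. \<Delta> s < 0"
    using first_downcrossing[OF cont \<open>l \<le> r\<close> \<open>\<Delta> l > 0\<close> \<open>\<Delta> r < 0\<close>] by auto
  obtain \<delta> where "\<delta> > 0" and avoid: "\<And>x. x \<in> {l..r} \<Longrightarrow> \<Delta> x = 0 \<Longrightarrow> x \<noteq> z \<Longrightarrow> \<delta> \<le> \<bar>z - x\<bar>"
    using finite_set_avoid[OF fin, of z] by (auto simp: dist_real_def)
  define d where "d = min \<delta> (min (z - l) (r - z)) / 2"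
  have d: "0 < d" "d < \<delta>" "d < z - l" "d < r - z"
    using \<open>\<delta> > 0\<close> z unfolding d_def by auto
  have "\<Delta> (z - x) * \<Delta> (z + x) < 0" if x: "x \<in> {0<..d}" for x
  proof (rule mult_pos_neg)
    show "\<Delta> (z - x) > 0"
      using left[of "z - x"] avoid[of "z - x"] x d by force
    show "\<Delta> (z + x) < 0"
    proof (rule ccontr)
      assume "\<not> \<Delta> (z + x) < 0"
      obtain s where s: "s \<in> {z<..<z + x}" "\<Delta> s < 0"
        using right[of x] x by auto
      moreover have "continuous_on {s..z + x} \<Delta>"
        using s x d by (intro continuous_on_subset[OF cont]) auto
      ultimately obtain w where "w \<in> {s..z + x}" "\<Delta> w = 0"
        using IVT'[of \<Delta> s 0 "z + x"] \<open>\<not> \<Delta> (z + x) < 0\<close> by force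
      then show False
        using avoid[of w] s x d by auto
    qed
  qed
  then have "(z, z) \<in> sign_switches \<Delta> c0 d0"
    unfolding sign_switches_def using z d assms(6,7) by (auto intro!: exI[of _ d])
  then show ?thesis
    using z by force
qed

lemma sign_switch_between:
  fixes \<Delta> :: "real \<Rightarrow> real"
  assumes cont: "continuous_on {l..r} \<Delta>" and "l \<le> r" "\<Delta> l * \<Delta> r < 0"
    and fin: "finite {x\<in>{l..r}. \<Delta> x = 0}" and "c0 \<le> l" "r \<le> d0"
  shows "\<exists>s\<in>sign_switches \<Delta> c0 d0. l < fst s \<and> snd s < r"
proof (cases "\<Delta> l > 0")
  case True
  then show ?thesis
    using assms by (intro sign_switch_between_pos_neg) (auto simp: mult_less_0_iff)
next
  case False
  have "continuous_on {l..r} (\<lambda>x. - \<Delta> x)"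
    using cont by (rule continuous_on_minus)
  then show ?thesis
    using sign_switch_between_pos_neg[of l r "\<lambda>x. - \<Delta> x" c0 d0] assms False
    by (auto simp: sign_switches_uminus mult_less_0_iff)
qed

lemma sign_switch_nonzero_beside:
  assumes "(c, d) \<in> sign_switches \<Delta> c0 d0"
  shows "\<exists>\<delta>>0. \<forall>x\<in>{0<..\<delta>}. \<Delta> (c - x) \<noteq> 0 \<and> \<Delta> (d + x) \<noteq> 0"
  using assms unfolding sign_switches_def by (force simp: mult_less_0_iff)

lemma sign_switches_separated:
  assumes s: "(c, d) \<in> sign_switches \<Delta> c0 d0" and s': "(c', d') \<in> sign_switches \<Delta> c0 d0"
    and "(c, d) \<noteq> (c', d')" "c \<le> c'"
  shows "d < c'"
proof (rule ccontr)
  assume "\<not> d < c'"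
  have "c \<le> d" "c' \<le> d'"
    using s s' unfolding sign_switches_def by auto
  have zero: "\<Delta> x = 0" if "c \<le> x \<and> x \<le> d \<or> c' \<le> x \<and> x \<le> d'" for x
    using s s' that unfolding sign_switches_def by auto
  obtain \<delta> where "\<delta> > 0" and \<delta>: "\<And>x. x \<in> {0<..\<delta>} \<Longrightarrow> \<Delta> (d + x) \<noteq> 0"
    using sign_switch_nonzero_beside[OF s] by auto
  obtain \<delta>' where "\<delta>' > 0" and \<delta>': "\<And>x. x \<in> {0<..\<delta>'} \<Longrightarrow> \<Delta> (c' - x) \<noteq> 0 \<and> \<Delta> (d' + x) \<noteq> 0"
    using sign_switch_nonzero_beside[OF s'] by auto
  consider "c < c'" | "c = c'" "d < d'" | "c = c'" "d' < d"
    using \<open>c \<le> c'\<close> \<open>(c, d) \<noteq> (c', d')\<close> by (cases "c = c'") (auto simp: neq_iff)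
  then show False
  proof cases
    case 1
    define x where "x = min \<delta>' (c' - c)"
    have "x \<in> {0<..\<delta>'}" "c \<le> c' - x" "c' - x \<le> d"
      using 1 \<open>\<delta>' > 0\<close> \<open>\<not> d < c'\<close> unfolding x_def by auto
    then show False
      using \<delta>'[of x] zero[of "c' - x"] by auto
  next
    case 2
    define x where "x = min \<delta> (d' - d)"
    have "x \<in> {0<..\<delta>}" "c' \<le> d + x" "d + x \<le> d'"
      using 2 \<open>\<delta> > 0\<close> \<open>c \<le> d\<close> unfolding x_def by auto
    then show False
      using \<delta>[of x] zero[of "d + x"] by auto
  next
    case 3
    define x where "x = min \<delta>' (d - d')"
    have "x \<in> {0<..\<delta>'}" "c \<le> d' + x" "d' + x \<le> d"
      using 3 \<open>\<delta>' > 0\<close> \<open>c' \<le> d'\<close> unfolding x_def by auto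
    then show False
      using \<delta>'[of x] zero[of "d' + x"] by auto
  qed
qed

section \<open>Sign changes on disjoint intervals\<close>

definition disjoint_sign_changes :: "(real \<Rightarrow> real) \<Rightarrow> real \<Rightarrow> (real \<times> real) set \<Rightarrow> bool" where
  "disjoint_sign_changes \<Delta> D P \<longleftrightarrow> finite P \<and> disjoint_family_on (\<lambda>p. {fst p<..<snd p}) P \<and>
     (\<forall>(l, r)\<in>P. 0 < l \<and> l < r \<and> r < D \<and> \<Delta> l * \<Delta> r < 0)"

lemma disjoint_sign_changes_transfer:
  assumes "disjoint_sign_changes \<Delta> D P" and "\<And>l r. (l, r) \<in> P \<Longrightarrow> \<Delta>' l * \<Delta>' r < 0"
  shows "disjoint_sign_changes \<Delta>' D P"
  using assms unfolding disjoint_sign_changes_def by auto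

lemma eventually_disjoint_sign_changes:
  assumes P: "disjoint_sign_changes \<Delta> D P"
    and lim: "\<And>x. 0 < x \<Longrightarrow> x < D \<Longrightarrow> ((\<lambda>n. \<Delta>s n x) \<longlongrightarrow> \<Delta> x) F"
  shows "eventually (\<lambda>n. disjoint_sign_changes (\<Delta>s n) D P) F"
proof -
  have "eventually (\<lambda>n. \<forall>p\<in>P. \<Delta>s n (fst p) * \<Delta>s n (snd p) < 0) F"
  proof (intro eventually_ball_finite ballI)
    show "finite P"
      using P unfolding disjoint_sign_changes_def by blast
    fix p assume "p \<in> P"
    then have "0 < fst p" "fst p < D" "0 < snd p" "snd p < D" "\<Delta> (fst p) * \<Delta> (snd p) < 0"
      using P unfolding disjoint_sign_changes_def by auto
    then show "eventually (\<lambda>n. \<Delta>s n (fst p) * \<Delta>s n (snd p) < 0) F"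
      using lim[of "fst p"] lim[of "snd p"] by (intro order_tendstoD(2)[OF tendsto_mult]) auto
  qed
  then show ?thesis
    by (rule eventually_mono) (use disjoint_sign_changes_transfer[OF P] in force)
qed

lemma num_switches_leI:
  assumes "\<And>S. finite S \<Longrightarrow> S \<subseteq> sign_switches \<Delta> c0 d0 \<Longrightarrow> enat (card S) \<le> x"
  shows "num_switches \<Delta> c0 d0 \<le> x"
proof (cases "finite (sign_switches \<Delta> c0 d0)")
  case True
  then show ?thesis
    using assms unfolding num_switches_def by simp
next
  case False
  have le: "enat m \<le> x" for m
  proof -
    obtain S where "finite S" "card S = m" "S \<subseteq> sign_switches \<Delta> c0 d0"
      using infinite_arbitrarily_large[OF False] by blast
    then show ?thesis
      using assms[of S] by simp
  qed
  have "x = \<infinity>"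
  proof (cases x)
    case (enat k)
    then show ?thesis
      using le[of "Suc k"] by simp
  qed simp
  then show ?thesis
    by simp
qed

lemma card_le_num_switches:
  "finite S \<Longrightarrow> S \<subseteq> sign_switches \<Delta> c0 d0 \<Longrightarrow> enat (card S) \<le> num_switches \<Delta> c0 d0"
  unfolding num_switches_def by (auto intro: card_mono)

lemma card_le_num_switches_if_finite_zeros:
  assumes P: "disjoint_sign_changes \<Delta> D P" and cont: "continuous_on {0..D} \<Delta>"
    and fin: "\<forall>(l, r)\<in>P. finite {x\<in>{l..r}. \<Delta> x = 0}"
  shows "enat (card P) \<le> num_switches \<Delta> 0 D"
proof -
  have "finite P" and disj: "disjoint_family_on (\<lambda>p. {fst p<..<snd p}) P"
    using P unfolding disjoint_sign_changes_def by auto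
  have "\<forall>p\<in>P. \<exists>s. s \<in> sign_switches \<Delta> 0 D \<and> fst p < fst s \<and> snd s < snd p"
  proof
    fix p assume "p \<in> P"
    obtain l r where "p = (l, r)"
      by fastforce
    then have "0 < l" "l < r" "r < D" "\<Delta> l * \<Delta> r < 0" "finite {x\<in>{l..r}. \<Delta> x = 0}"
      using \<open>p \<in> P\<close> P fin unfolding disjoint_sign_changes_def by auto
    then show "\<exists>s. s \<in> sign_switches \<Delta> 0 D \<and> fst p < fst s \<and> snd s < snd p"
      using \<open>p = (l, r)\<close> sign_switch_between[OF continuous_on_subset[OF cont, of "{l..r}"], of 0 D]
      by force
  qed
  from bchoice[OF this] obtain sw
    where sw: "\<And>p. p \<in> P \<Longrightarrow> sw p \<in> sign_switches \<Delta> 0 D \<and> fst p < fst (sw p) \<and> snd (sw p) < snd p"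
    by blast
  have mem: "fst (sw p) \<in> {fst p<..<snd p}" if "p \<in> P" for p
    using sw[OF that] unfolding sign_switches_def by auto
  have "inj_on sw P"
  proof (rule inj_onI)
    fix p p' assume "p \<in> P" "p' \<in> P" "sw p = sw p'"
    then have "{fst p<..<snd p} \<inter> {fst p'<..<snd p'} \<noteq> {}"
      using mem by (metis disjoint_iff)
    then show "p = p'"
      using disjoint_family_onD[OF disj \<open>p \<in> P\<close> \<open>p' \<in> P\<close>] by blast
  qed
  moreover have "enat (card (sw ` P)) \<le> num_switches \<Delta> 0 D"
    using \<open>finite P\<close> sw by (intro card_le_num_switches) auto
  ultimately show ?thesis
    by (simp add: card_image)
qed

lemma sign_switches_thicken:
  assumes "finite S" and S: "S \<subseteq> sign_switches \<Delta> c0 d0"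
  obtains x where "x > 0"
    and "\<And>s. s \<in> S \<Longrightarrow> c0 < fst s - x \<and> snd s + x < d0 \<and> \<Delta> (fst s - x) * \<Delta> (snd s + x) < 0"
    and "\<And>s s'. s \<in> S \<Longrightarrow> s' \<in> S \<Longrightarrow> s \<noteq> s' \<Longrightarrow> fst s \<le> fst s' \<Longrightarrow> snd s + x < fst s' - x"
proof -
  define Q where "Q x \<longleftrightarrow> (\<forall>s\<in>S. c0 < fst s - x \<and> snd s + x < d0 \<and> \<Delta> (fst s - x) * \<Delta> (snd s + x) < 0
      \<and> (\<forall>s'\<in>S. s \<noteq> s' \<longrightarrow> fst s \<le> fst s' \<longrightarrow> snd s + x < fst s' - x))" for x
  have "eventually Q (at_right 0)"
    unfolding Q_def
  proof (intro eventually_ball_finite \<open>finite S\<close> ballI eventually_conj)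
    fix s assume "s \<in> S"
    then obtain \<delta> where "\<delta> > 0" and \<delta>: "\<forall>x\<in>{0<..\<delta>}. \<Delta> (fst s - x) * \<Delta> (snd s + x) < 0"
      and "c0 < fst s" "snd s < d0"
      using S unfolding sign_switches_def by force
    show "eventually (\<lambda>x. c0 < fst s - x) (at_right 0)"
      using \<open>c0 < fst s\<close> unfolding eventually_at_right_field by (auto intro!: exI[of _ "fst s - c0"])
    show "eventually (\<lambda>x. snd s + x < d0) (at_right 0)"
      using \<open>snd s < d0\<close> unfolding eventually_at_right_field by (auto intro!: exI[of _ "d0 - snd s"])
    show "eventually (\<lambda>x. \<Delta> (fst s - x) * \<Delta> (snd s + x) < 0) (at_right 0)"
      unfolding eventually_at_right_field using \<open>\<delta> > 0\<close> \<delta> by (intro exI[of _ \<delta>]) auto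
    fix s' assume "s' \<in> S"
    show "eventually (\<lambda>x. s \<noteq> s' \<longrightarrow> fst s \<le> fst s' \<longrightarrow> snd s + x < fst s' - x) (at_right 0)"
    proof (cases "s \<noteq> s' \<and> fst s \<le> fst s'")
      case True
      then have "snd s < fst s'"
        using sign_switches_separated[of "fst s" "snd s" \<Delta> c0 d0 "fst s'" "snd s'"] \<open>s \<in> S\<close> \<open>s' \<in> S\<close> S
        by auto
      then have "eventually (\<lambda>x. x < (fst s' - snd s) / 2) (at_right 0)"
        unfolding eventually_at_right_field by (auto intro!: exI[of _ "(fst s' - snd s) / 2"])
      then show ?thesis
        by (rule eventually_mono) auto
    qed auto
  qed
  then obtain x where "0 < x" "Q x"
    using eventually_happens'[OF trivial_limit_at_right_real eventually_conj[OF eventually_at_right_less]]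
    by blast
  then show thesis
    using that unfolding Q_def by blast
qed

lemma disjoint_sign_changes_of_sign_switches:
  assumes "finite S" and S: "S \<subseteq> sign_switches \<Delta> 0 D"
  shows "\<exists>P. disjoint_sign_changes \<Delta> D P \<and> card P = card S"
proof -
  obtain x where "0 < x"
    and inside: "\<And>s. s \<in> S \<Longrightarrow> 0 < fst s - x \<and> snd s + x < D \<and> \<Delta> (fst s - x) * \<Delta> (snd s + x) < 0"
    and sep: "\<And>s s'. s \<in> S \<Longrightarrow> s' \<in> S \<Longrightarrow> s \<noteq> s' \<Longrightarrow> fst s \<le> fst s' \<Longrightarrow> snd s + x < fst s' - x"
    using sign_switches_thicken[OF assms] by blast
  define P where "P = (\<lambda>s. (fst s - x, snd s + x)) ` S"
  have "fst s \<le> snd s" if "s \<in> S" for s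
    using that S unfolding sign_switches_def by auto
  then have changes: "\<forall>(l, r)\<in>P. 0 < l \<and> l < r \<and> r < D \<and> \<Delta> l * \<Delta> r < 0"
    using inside \<open>0 < x\<close> unfolding P_def by fastforce
  have disj: "{fst s - x<..<snd s + x} \<inter> {fst s' - x<..<snd s' + x} = {}"
    if "s \<in> S" "s' \<in> S" "s \<noteq> s'" for s s'
  proof (cases "fst s \<le> fst s'")
    case True
    then show ?thesis
      using sep[OF that True] by auto
  next
    case False
    then show ?thesis
      using sep[OF that(2,1)] that(3) by auto
  qed
  have disjoint: "disjoint_family_on (\<lambda>p. {fst p<..<snd p}) P"
    unfolding disjoint_family_on_def
  proof (intro ballI impI)
    fix p p' assume "p \<in> P" "p' \<in> P" "p \<noteq> p'"
    then obtain s s' where "s \<in> S" "s' \<in> S" "p = (fst s - x, snd s + x)" "p' = (fst s' - x, snd s' + x)"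
      unfolding P_def by blast
    with \<open>p \<noteq> p'\<close> disj show "{fst p<..<snd p} \<inter> {fst p'<..<snd p'} = {}"
      by auto
  qed
  have "finite P"
    unfolding P_def using \<open>finite S\<close> by simp
  then have "disjoint_sign_changes \<Delta> D P"
    unfolding disjoint_sign_changes_def using disjoint changes by (intro conjI)
  moreover have "card P = card S"
  proof -
    have "inj_on (\<lambda>s. (fst s - x, snd s + x)) S"
      by (rule inj_onI) (auto simp: prod_eq_iff)
    then show ?thesis
      unfolding P_def by (rule card_image)
  qed
  ultimately show ?thesis
    by (intro exI[of _ P] conjI)
qed

lemma sign_change_iff_ratio:
  fixes \<phi> \<psi> :: "real \<Rightarrow> real"
  assumes "0 < \<psi> l" "0 < \<psi> r"
  shows "(\<phi> l - y * \<psi> l) * (\<phi> r - y * \<psi> r) < 0 \<longleftrightarrow> (\<phi> l / \<psi> l - y) * (\<phi> r / \<psi> r - y) < 0"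
proof -
  have "(\<phi> l - y * \<psi> l) * (\<phi> r - y * \<psi> r) = (\<psi> l * \<psi> r) * ((\<phi> l / \<psi> l - y) * (\<phi> r / \<psi> r - y))"
    using assms by (simp add: field_simps)
  moreover have "0 < \<psi> l * \<psi> r"
    using assms by simp
  ultimately show ?thesis
    by (metis mult_less_cancel_left_pos mult_zero_right)
qed

lemma AE_finite_ratio_level_sets:
  fixes \<phi> \<psi> :: "real \<Rightarrow> real"
  assumes \<phi>: "antimono_on {0..D} \<phi>" "\<phi> ` {0..D} \<subseteq> {0..1}"
    and \<psi>: "antimono_on {0..D} \<psi>" "\<And>x. 0 \<le> x \<Longrightarrow> x < D \<Longrightarrow> 0 < \<psi> x"
    and "finite P" and inside: "\<And>l r. (l, r) \<in> P \<Longrightarrow> 0 < l \<and> l < r \<and> r < D"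
  shows "AE y in lborel. \<forall>(l, r)\<in>P. finite {x\<in>{l..r}. \<phi> x / \<psi> x = y}"
proof (unfold case_prod_beta, intro AE_finite_allI \<open>finite P\<close>)
  fix p assume "p \<in> P"
  then have "0 < fst p" "fst p < snd p" "snd p < D"
    using inside[of "fst p" "snd p"] by auto
  then have "variation_controlled (\<lambda>x. \<phi> x / \<psi> x) (\<lambda>t. 1 / \<psi> t - \<phi> t / \<psi> (snd p)) (fst p) (snd p)"
    using \<phi> \<psi>
    by (intro variation_controlled_ratio monotone_on_subset[OF \<phi>(1)] monotone_on_subset[OF \<psi>(1)]) auto
  then show "AE y in lborel. finite {x\<in>{fst p..snd p}. \<phi> x / \<psi> x = y}"
    by (rule variation_controlled.AE_finite_level_set)
qed

lemma exists_perturbed_sign_changes_finite_zeros: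
  fixes \<phi> \<psi> :: "real \<Rightarrow> real"
  assumes \<phi>: "antimono_on {0..D} \<phi>" "\<phi> ` {0..D} \<subseteq> {0..1}"
    and \<psi>: "antimono_on {0..D} \<psi>" "\<And>x. 0 \<le> x \<Longrightarrow> x < D \<Longrightarrow> 0 < \<psi> x"
    and "b > 0" and P: "disjoint_sign_changes (\<lambda>x. \<phi> x - b * \<psi> x) D P"
  shows "\<exists>y>0. disjoint_sign_changes (\<lambda>x. \<phi> x - y * \<psi> x) D P \<and>
    (\<forall>(l, r)\<in>P. finite {x\<in>{l..r}. \<phi> x - y * \<psi> x = 0})"
proof -
  have "finite P" and inside: "\<And>l r. (l, r) \<in> P \<Longrightarrow> 0 < l \<and> l < r \<and> r < D"
    and sign: "\<And>l r. (l, r) \<in> P \<Longrightarrow> (\<phi> l - b * \<psi> l) * (\<phi> r - b * \<psi> r) < 0"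
    using P unfolding disjoint_sign_changes_def by auto
  define h where "h x = \<phi> x / \<psi> x" for x
  have sign_iff: "(\<phi> l - y * \<psi> l) * (\<phi> r - y * \<psi> r) < 0 \<longleftrightarrow> (h l - y) * (h r - y) < 0"
    if "(l, r) \<in> P" for l r y
    unfolding h_def using inside[OF that] \<psi>(2) by (intro sign_change_iff_ratio) auto
  have "eventually (\<lambda>y. 0 < y \<and> (\<forall>(l, r)\<in>P. (h l - y) * (h r - y) < 0)) (nhds b)"
  proof (unfold case_prod_beta, intro eventually_conj eventually_ball_finite \<open>finite P\<close> ballI)
    show "eventually (\<lambda>y. 0 < y) (nhds b)"
      using filterlim_ident \<open>b > 0\<close> by (rule order_tendstoD(1))
    fix p assume "p \<in> P"
    then have "(h (fst p) - b) * (h (snd p) - b) < 0"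
      using sign_iff[of "fst p" "snd p" b] sign[of "fst p" "snd p"] by simp
    moreover have "((\<lambda>y. (h (fst p) - y) * (h (snd p) - y)) \<longlongrightarrow> (h (fst p) - b) * (h (snd p) - b)) (nhds b)"
      by (intro tendsto_intros filterlim_ident)
    ultimately show "eventually (\<lambda>y. (h (fst p) - y) * (h (snd p) - y) < 0) (nhds b)"
      by (rule order_tendstoD(2)[rotated])
  qed
  then obtain e where "e > 0"
    and e: "\<And>y. dist y b < e \<Longrightarrow> 0 < y \<and> (\<forall>(l, r)\<in>P. (h l - y) * (h r - y) < 0)"
    unfolding eventually_nhds_metric by blast
  obtain y where "y \<in> {b - e<..<b + e}" and fin: "\<forall>(l, r)\<in>P. finite {x\<in>{l..r}. h x = y}"
    using AE_lborel_exists_between[OF AE_finite_ratio_level_sets[OF \<phi> \<psi> \<open>finite P\<close> inside], of "b - e" "b + e"]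
      \<open>e > 0\<close> unfolding h_def by auto
  then have "0 < y" and changes: "\<And>l r. (l, r) \<in> P \<Longrightarrow> (h l - y) * (h r - y) < 0"
    using e[of y] by (auto simp: dist_real_def abs_less_iff)
  have "disjoint_sign_changes (\<lambda>x. \<phi> x - y * \<psi> x) D P"
    using changes sign_iff by (intro disjoint_sign_changes_transfer[OF P]) blast
  moreover have "finite {x\<in>{l..r}. \<phi> x - y * \<psi> x = 0}" if "(l, r) \<in> P" for l r
  proof -
    have "\<phi> x - y * \<psi> x = 0 \<longleftrightarrow> h x = y" if "x \<in> {l..r}" for x
    proof -
      have "0 < \<psi> x"
        using \<psi>(2) inside[OF \<open>(l, r) \<in> P\<close>] that by auto
      then show ?thesis
        unfolding h_def by (auto simp: field_simps)
    qed
    then have "{x\<in>{l..r}. \<phi> x - y * \<psi> x = 0} = {x\<in>{l..r}. h x = y}"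
      by auto
    then show ?thesis
      using fin that by auto
  qed
  ultimately show ?thesis
    using \<open>0 < y\<close> by blast
qed

section \<open>Crossing numbers\<close>

lemma classD_antimono:
  assumes "classD f"
  shows "antimono_on {0..1} f"
proof (rule monotone_onI)
  fix x y :: real assume "x \<in> {0..1}" "y \<in> {0..1}" "x \<le> y"
  then show "f y \<le> f x"
    using monotone_onD[of "{0..1}" "(<)" "\<lambda>x y. y < x" f x y] assms unfolding classD_def
    by (cases "x = y") auto
qed

lemma classD_pos:
  assumes "classD f" "0 \<le> x" "x < 1"
  shows "0 < f x"
  using monotone_onD[of "{0..1}" "(<)" "\<lambda>x y. y < x" f x 1] assms unfolding classD_def by auto

lemma rescaled_mem_unit_interval:
  fixes a x :: real
  assumes "a > 0" "x \<in> {0..min 1 (1 / a)}"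
  shows "a * x \<in> {0..1}"
proof -
  have "a * x \<le> a * (1 / a)"
    using assms by (intro mult_left_mono) auto
  then show ?thesis
    using assms by auto
qed

lemma continuous_on_rescaled_diff:
  assumes "classD f" "classD g" "a > 0"
  shows "continuous_on {0..min 1 (1 / a)} (\<lambda>x. f (a * x) - b * g x)"
proof -
  have "continuous_on {0..1} f" "continuous_on {0..1} g"
    using assms unfolding classD_def by blast+
  then have "continuous_on {0..min 1 (1 / a)} (\<lambda>x. f (a * x))" "continuous_on {0..min 1 (1 / a)} g"
    using rescaled_mem_unit_interval[OF \<open>a > 0\<close>]
    by (auto intro: continuous_on_compose2[of _ f _ "\<lambda>x. a * x"] continuous_on_mult_left continuous_on_id
        continuous_on_subset)
  then show ?thesis
    by (intro continuous_on_diff continuous_on_mult_left)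
qed

lemma card_le_crossing:
  assumes f: "classD f" and g: "classD g" and "a > 0" "b > 0"
    and P: "disjoint_sign_changes (\<lambda>x. f (a * x) - b * g x) (min 1 (1 / a)) P"
  shows "enat (card P) \<le> crossing f g"
proof -
  define D where "D = min 1 (1 / a)"
  have "D \<le> 1"
    unfolding D_def by simp
  have aD: "a * x \<in> {0..1}" if "x \<in> {0..D}" for x
    using rescaled_mem_unit_interval[OF \<open>a > 0\<close>] that unfolding D_def by blast
  have mono: "antimono_on {0..D} (\<lambda>x. f (a * x))"
  proof (rule monotone_onI)
    fix x y assume "x \<in> {0..D}" "y \<in> {0..D}" "x \<le> y"
    then show "f (a * y) \<le> f (a * x)"
      using monotone_onD[OF classD_antimono[OF f] aD aD, of x y] \<open>a > 0\<close> by simp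
  qed
  have img: "(\<lambda>x. f (a * x)) ` {0..D} \<subseteq> {0..1}"
  proof (rule image_subsetI)
    fix x assume "x \<in> {0..D}"
    then have "a * x \<in> {0..1}"
      by (rule aD)
    then show "f (a * x) \<in> {0..1}"
      using f unfolding classD_def by blast
  qed
  have antig: "antimono_on {0..D} g"
    using monotone_on_subset[OF classD_antimono[OF g]] \<open>D \<le> 1\<close> by auto
  have gpos: "0 < g x" if "0 \<le> x" "x < D" for x
    using classD_pos[OF g] that \<open>D \<le> 1\<close> by simp
  have "disjoint_sign_changes (\<lambda>x. f (a * x) - b * g x) D P"
    using P unfolding D_def .
  from exists_perturbed_sign_changes_finite_zeros[OF mono img antig gpos \<open>b > 0\<close> this]
  obtain y where "y > 0" and Py: "disjoint_sign_changes (\<lambda>x. f (a * x) - y * g x) D P"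
    and fin: "\<forall>(l, r)\<in>P. finite {x\<in>{l..r}. f (a * x) - y * g x = 0}"
    by blast
  have "continuous_on {0..D} (\<lambda>x. f (a * x) - y * g x)"
    unfolding D_def using f g \<open>a > 0\<close> by (rule continuous_on_rescaled_diff)
  then have "enat (card P) \<le> num_switches (\<lambda>x. f (a * x) - y * g x) 0 D"
    by (rule card_le_num_switches_if_finite_zeros[OF Py _ fin])
  also have "\<dots> \<le> crossing f g"
    unfolding crossing_def D_def using \<open>a > 0\<close> \<open>y > 0\<close> by (intro SUP_upper2[of "(a, y)"]) auto
  finally show ?thesis .
qed

lemma crossing_le_SUP_crossing_of_tendsto:
  assumes f: "classD f" and g: "classD g" and F: "\<And>n. classD (F n)" and G: "\<And>n. classD (G n)"
    and F_lim: "\<And>x. x \<in> {0..1} \<Longrightarrow> (\<lambda>n. F n x) \<longlonglongrightarrow> f x"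
    and G_lim: "\<And>x. x \<in> {0..1} \<Longrightarrow> (\<lambda>n. G n x) \<longlonglongrightarrow> g x"
  shows "crossing f g \<le> (SUP n. crossing (F n) (G n))"
proof -
  have "num_switches (\<lambda>x. f (a * x) - b * g x) 0 (min 1 (1 / a)) \<le> (SUP n. crossing (F n) (G n))"
    if "a > 0" "b > 0" for a b
  proof (rule num_switches_leI)
    fix S assume "finite S" "S \<subseteq> sign_switches (\<lambda>x. f (a * x) - b * g x) 0 (min 1 (1 / a))"
    then obtain P where P: "disjoint_sign_changes (\<lambda>x. f (a * x) - b * g x) (min 1 (1 / a)) P"
      and "card P = card S"
      using disjoint_sign_changes_of_sign_switches by blast
    have "((\<lambda>n. F n (a * x) - b * G n x) \<longlongrightarrow> f (a * x) - b * g x) sequentially"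
      if "0 < x" "x < min 1 (1 / a)" for x
    proof -
      have "a * x \<in> {0..1}" "x \<in> {0..1}"
        using rescaled_mem_unit_interval[OF \<open>a > 0\<close>, of x] that by auto
      then show ?thesis
        by (intro tendsto_intros F_lim G_lim)
    qed
    then have "eventually (\<lambda>n. disjoint_sign_changes (\<lambda>x. F n (a * x) - b * G n x) (min 1 (1 / a)) P)
        sequentially"
      by (rule eventually_disjoint_sign_changes[OF P])
    then obtain N where "disjoint_sign_changes (\<lambda>x. F N (a * x) - b * G N x) (min 1 (1 / a)) P"
      by (meson eventually_sequentially order_refl)
    then have "enat (card P) \<le> crossing (F N) (G N)"
      by (rule card_le_crossing[OF F G \<open>a > 0\<close> \<open>b > 0\<close>])
    also have "\<dots> \<le> (SUP n. crossing (F n) (G n))"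
      by (rule SUP_upper) simp
    finally show "enat (card S) \<le> (SUP n. crossing (F n) (G n))"
      using \<open>card P = card S\<close> by simp
  qed
  then show ?thesis
    unfolding crossing_def by (intro SUP_least) auto
qed

lemma exists_less_in_open_interval:
  fixes \<Delta> :: "real \<Rightarrow> real"
  assumes "continuous_on {l..r} \<Delta>" "l < r" "\<Delta> l < c \<or> \<Delta> r < c"
  shows "\<exists>x\<in>{l<..<r}. \<Delta> x < c"
proof (rule ccontr)
  assume "\<not> ?thesis"
  then have ge: "c \<le> \<Delta> x" if "x \<in> {l..r}" for x
    using continuous_ge_on_closure[of "{l<..<r}" \<Delta> x c] assms(1,2) that by (auto simp: not_less)
  show False
    using ge[of l] ge[of r] assms(2,3) by auto
qed

lemma two_le_crossing_of_sign_pattern: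
  fixes f g :: "real \<Rightarrow> real" and a b x0 :: real
  defines "D \<equiv> min 1 (1 / a)" and "\<Delta> \<equiv> \<lambda>x. f (a * x) - b * g x"
  assumes f: "classD f" and g: "classD g" and "a > 0" "b > 0"
    and "0 < x0" "x0 < D" "\<Delta> 0 < 0" "\<Delta> x0 > 0" "\<Delta> D < 0"
  shows "2 \<le> crossing f g"
proof -
  have cont: "continuous_on {0..D} \<Delta>"
    unfolding \<Delta>_def D_def using f g \<open>a > 0\<close> by (rule continuous_on_rescaled_diff)
  obtain p0 where "p0 \<in> {0<..<x0}" "\<Delta> p0 < 0"
    using exists_less_in_open_interval[of 0 x0 \<Delta> 0] \<open>\<Delta> 0 < 0\<close> \<open>0 < x0\<close> \<open>x0 < D\<close>
      continuous_on_subset[OF cont, of "{0..x0}"] by auto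
  obtain p2 where "p2 \<in> {x0<..<D}" "\<Delta> p2 < 0"
    using exists_less_in_open_interval[of x0 D \<Delta> 0] \<open>\<Delta> D < 0\<close> \<open>0 < x0\<close> \<open>x0 < D\<close>
      continuous_on_subset[OF cont, of "{x0..D}"] by auto
  define P where "P = {(p0, x0), (x0, p2)}"
  have "disjoint_sign_changes \<Delta> D P"
    using \<open>p0 \<in> {0<..<x0}\<close> \<open>\<Delta> p0 < 0\<close> \<open>p2 \<in> {x0<..<D}\<close> \<open>\<Delta> p2 < 0\<close> \<open>\<Delta> x0 > 0\<close>
    unfolding disjoint_sign_changes_def disjoint_family_on_def P_def
    by (auto simp: mult_neg_pos mult_pos_neg)
  then have "enat (card P) \<le> crossing f g"
    unfolding \<Delta>_def D_def by (rule card_le_crossing[OF f g \<open>a > 0\<close> \<open>b > 0\<close>])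
  moreover have "card P = 2"
    using \<open>p0 \<in> {0<..<x0}\<close> unfolding P_def by auto
  ultimately show ?thesis
    by (simp add: numeral_eq_enat)
qed

lemma two_le_crossing:
  assumes f: "classD f" and g: "classD g" and le: "\<forall>x\<in>{0..1}. g x \<le> f x"
    and x0: "x0 \<in> {0..1}" "f x0 \<noteq> g x0"
  shows "2 \<le> crossing f g"
proof -
  have f01: "f 0 = 1" "f 1 = 0" "continuous_on {0..1} f" and g01: "g 0 = 1" "g 1 = 0"
    using f g unfolding classD_def by auto
  then have "0 < x0" "x0 < 1"
    using x0 by (auto simp: le_less)
  define e where "e = f x0 - g x0"
  have "e > 0"
    using le x0 unfolding e_def by force
  have "0 \<le> g x0" "g x0 \<le> 1"
    using g x0 unfolding classD_def by (auto simp: image_subset_iff)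
  have "\<exists>t\<ge>x0. t \<le> 1 \<and> f t = g x0 + e / 2"
    using f01 \<open>0 \<le> g x0\<close> \<open>e > 0\<close> \<open>x0 < 1\<close> continuous_on_subset[OF f01(3), of "{x0..1}"] x0
    by (intro IVT2') (auto simp: e_def field_simps)
  then obtain t where "x0 \<le> t" "t \<le> 1" and ft: "f t = g x0 + e / 2"
    by blast
  have "x0 < t" "t < 1"
    using ft f01 \<open>e > 0\<close> \<open>0 \<le> g x0\<close> \<open>x0 \<le> t\<close> \<open>t \<le> 1\<close> unfolding e_def by (auto simp: le_less field_simps)
  define a b D where "a = t / x0" and "b = 1 + e / 4" and "D = x0 / t"
  have "a > 0" "b > 0" "x0 < D" "D < 1"
    using \<open>0 < x0\<close> \<open>x0 < t\<close> \<open>t < 1\<close> \<open>e > 0\<close> unfolding a_def b_def D_def by (auto simp: field_simps)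
  have D_eq: "min 1 (1 / a) = D" and "a * D = 1" "a * x0 = t"
    using \<open>0 < x0\<close> \<open>x0 < t\<close> \<open>t < 1\<close> unfolding a_def D_def by auto
  have "e / 4 * g x0 \<le> e / 4"
    using \<open>g x0 \<le> 1\<close> \<open>e > 0\<close> by (simp add: mult_left_le)
  moreover have "f (a * x0) - b * g x0 = e / 2 - e / 4 * g x0"
    unfolding \<open>a * x0 = t\<close> ft b_def by (simp add: algebra_simps)
  ultimately have "f (a * x0) - b * g x0 > 0"
    using \<open>e > 0\<close> by linarith
  moreover have "f (a * D) - b * g D < 0"
    unfolding \<open>a * D = 1\<close> f01(2) using classD_pos[OF g, of D] \<open>x0 < D\<close> \<open>D < 1\<close> \<open>0 < x0\<close> \<open>b > 0\<close>
    by simp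
  moreover have "f (a * 0) - b * g 0 < 0"
    using f01 g01 \<open>e > 0\<close> unfolding b_def by simp
  ultimately show ?thesis
    using two_le_crossing_of_sign_pattern[OF f g \<open>a > 0\<close> \<open>b > 0\<close> \<open>0 < x0\<close>] \<open>x0 < D\<close>
    unfolding D_eq by simp
qed

theorem proposition3p5:
  fixes f g :: "real \<Rightarrow> real" and F G :: "nat \<Rightarrow> real \<Rightarrow> real"
  assumes "classD f" and "classD g"
    and "\<And>n. classD (F n)" and "\<And>n. classD (G n)"
    and "uniform_limit {0..1} F f sequentially"
    and "uniform_limit {0..1} G g sequentially"
  shows "crossing f g \<le> (SUP n. crossing (F n) (G n)) \<and>
    ((\<forall>n. dominated (G n) (F n)) \<longrightarrow> (\<forall>x\<in>{0..1}. f x = g x) \<or> dominated g f)"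
proof -
  have F_lim: "\<And>x. x \<in> {0..1} \<Longrightarrow> (\<lambda>n. F n x) \<longlonglongrightarrow> f x"
    using tendsto_uniform_limitI[OF assms(5)] by blast
  have G_lim: "\<And>x. x \<in> {0..1} \<Longrightarrow> (\<lambda>n. G n x) \<longlonglongrightarrow> g x"
    using tendsto_uniform_limitI[OF assms(6)] by blast
  have le_SUP: "crossing f g \<le> (SUP n. crossing (F n) (G n))"
    by (rule crossing_le_SUP_crossing_of_tendsto[OF assms(1-4) F_lim G_lim])
  moreover have "(\<forall>x\<in>{0..1}. f x = g x) \<or> dominated g f" if dom: "\<forall>n. dominated (G n) (F n)"
  proof (cases "\<forall>x\<in>{0..1}. f x = g x")
    case False
    then obtain x0 where x0: "x0 \<in> {0..1}" "f x0 \<noteq> g x0"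
      by auto
    have le: "\<forall>x\<in>{0..1}. g x \<le> f x"
      using dom unfolding dominated_def by (auto intro: LIMSEQ_le[OF G_lim F_lim])
    have "(SUP n. crossing (F n) (G n)) = 2"
      using dom unfolding dominated_def by simp
    then have "crossing f g = 2"
      using le_SUP two_le_crossing[OF assms(1,2) le x0] by simp
    then show ?thesis
      using le unfolding dominated_def by simp
  qed simp
  ultimately show ?thesis
    by blast
qed

end
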